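(* Let $N$ be a positive integer and, for $t>-\log N$, let $\theta(t,N)=\lim_{n\to\infty}\Big(\int_N^n\frac{dx}{t+\log x}-\sum_{j=N}^{n-1}\frac{1}{H_j-\gamma+t}\Big)$. Then $t\mapsto\theta(t,N)$ is strictly totally monotone on $(-\log N,\infty)$, and for every nonnegative integer $k$ and every $t>-\log N$, $$(-1)^k\frac{d^k}{dt^k}\theta(t,N)=k!\lim_{n\to\infty}\Big(\int_N^n\frac{dx}{(t+\log x)^{k+1}}-\sum_{j=N}^{n-1}\frac{1}{(H_j-\gamma+t)^{k+1}}\Big)>0.$$
   Context: $\gamma$ is the Euler–Mascheroni constant and $H_j=\sum_{i=1}^j1/i$. A real function $f$ on an interval $I$ is strictly totally monotone on $I$ if it is continuous on $I$, infinitely differentiable on the interior of $I$, and $(-1)^kf^{(k)}(x)>0$ for all $x$ in the interior of $I$ and all integers $k\ge0$. *)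

theory Defs
  imports "HOL-Analysis.Analysis"
begin

definition strictly_totally_monotone :: "real set \<Rightarrow> (real \<Rightarrow> real) \<Rightarrow> bool" where
  "strictly_totally_monotone I f \<longleftrightarrow>
     continuous_on I f \<and>
     (\<forall>k::nat. \<forall>x\<in>interior I. ((deriv ^^ k) f) field_differentiable (at x)) \<and>
     (\<forall>k::nat. \<forall>x\<in>interior I. (-1) ^ k * (deriv ^^ k) f x > 0)"

definition theta :: "real \<Rightarrow> nat \<Rightarrow> real" where
  "theta t N = lim (\<lambda>n::nat. integral {real N..real n} (\<lambda>x. 1 / (t + ln x))
       - (\<Sum>j=N..<n. 1 / (harm j - euler_mascheroni + t)))"

end

theory Submission
  imports Defs "HOL-Real_Asymp.Real_Asymp"
begin

text \<open>With exponent \<open>k + 1\<close> in place of \<open>1\<close>, the limit defining \<open>\<theta>\<close> is the series over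
  \<open>j \<ge> N\<close> of \<open>theta_term k t j = integral over [j, j+1] of (t + ln x)^-(k+1) - (H j - \<gamma> + t)^-(k+1)\<close>.
  Since \<open>ln (j + 1/2) < H j - \<gamma> \<le> ln (j + 1)\<close> and \<open>(t + ln x)^-(k+1)\<close> is convex and decreasing
  in \<open>x\<close>, the integral lies between the values at \<open>j + 1/2\<close> and at \<open>j\<close>, so
  \<open>0 < theta_term k t j \<le> (t + ln j)^-(k+1) - (t + ln (j + 1))^-(k+1)\<close>. This telescoping majorant
  decreases in \<open>t\<close>, so the series converges uniformly on every \<open>[t0, \<infinity>)\<close> and may be
  differentiated termwise; as \<open>d/dt theta_term k = -(k + 1) theta_term (k + 1)\<close>, the \<open>k\<close>-th derivative of \<open>\<theta>\<close>
  is \<open>(-1)^k k!\<close> times the \<open>k\<close>-th series, which is positive.\<close>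

lemma ln_diff_gt:
  fixes x y :: real
  assumes "0 < x" "x < y"
  shows "2 * (y - x) / (x + y) < ln y - ln x"
proof -
  define \<phi> where "\<phi> z = ln z - 2 * (z - x) / (x + z)" for z
  have "\<phi> x < \<phi> y"
  proof (rule DERIV_pos_imp_increasing_open[OF assms(2)])
    fix z assume z: "x < z" "z < y"
    have "(\<phi> has_real_derivative (1/z - 4*x/(x+z)^2)) (at z)"
      unfolding \<phi>_def using z assms
      by (auto intro!: derivative_eq_intros simp: field_simps power2_eq_square)
    moreover have "1/z - 4*x/(x+z)^2 = (z-x)^2/(z*(x+z)^2)"
      using z assms by (simp add: divide_simps power2_eq_square) (simp add: algebra_simps)
    moreover have "(z-x)^2/(z*(x+z)^2) > 0" using z assms by auto
    ultimately show "\<exists>y. (\<phi> has_real_derivative y) (at z) \<and> 0 < y" by auto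
  next
    show "continuous_on {x..y} \<phi>" unfolding \<phi>_def using assms
      by (intro continuous_intros) auto
  qed
  thus ?thesis by (simp add: \<phi>_def)
qed

lemma ln_add_half_less_harm_minus_euler_mascheroni:
  "ln (real j + 1/2) < harm j - (euler_mascheroni::real)"
proof -
  define D where "D n = harm n - ln (real n + 1/2)" for n
  have step: "D (Suc n) < D n" for n
    using ln_diff_gt[of "real n + 1/2" "real n + 3/2"]
    by (simp add: D_def harm_Suc field_simps)
  have "(\<lambda>n. (harm n - ln (real n)) + (ln (real n) - ln (real n + 1/2))) \<longlonglongrightarrow> euler_mascheroni + 0"
    by (intro tendsto_add euler_mascheroni_LIMSEQ) real_asymp
  moreover have "eventually (\<lambda>n. (harm n - ln (real n)) + (ln (real n) - ln (real n + 1/2)) = D n) sequentially"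
    by (auto simp: D_def)
  ultimately have "D \<longlonglongrightarrow> euler_mascheroni" by (simp add: tendsto_cong)
  moreover have "decseq D" using step by (intro decseq_SucI) (simp add: less_imp_le)
  ultimately have "euler_mascheroni \<le> D (Suc j)" using decseq_ge by blast
  also have "\<dots> < D j" by (rule step)
  finally show ?thesis by (simp add: D_def)
qed

lemma harm_minus_euler_mascheroni_le_ln:
  "harm j - (euler_mascheroni::real) \<le> ln (real j + 1)"
proof (cases j)
  case 0
  then show ?thesis using euler_mascheroni_pos by (simp add: harm_expand)
next
  case (Suc n)
  have "harm (Suc n) - ln (real (n + 2)) + 1 / real (2 * (n + 2)) \<le> euler_mascheroni"
    by (rule euler_mascheroni_lower)
  moreover have "0 \<le> 1 / real (2 * (n + 2))" by simp
  ultimately have "harm (Suc n) - euler_mascheroni \<le> ln (real (n + 2))" by linarith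
  then show ?thesis using Suc by (simp add: add_ac)
qed

lemma has_real_derivative_inverse_power:
  fixes f :: "real \<Rightarrow> real"
  assumes "(f has_real_derivative f') (at x within S)" "f x \<noteq> 0"
  shows "((\<lambda>x. 1 / f x ^ (k+1)) has_real_derivative - (real k + 1) * f' / f x ^ (k+2)) (at x within S)"
proof -
  have "f x ^ Suc k * f x ^ Suc k = f x ^ k * f x ^ Suc (Suc k)" by (simp add: mult_ac)
  then show ?thesis using assms
    by (auto intro!: derivative_eq_intros
        simp: divide_simps power2_eq_square algebra_simps simp del: power_Suc)
qed

lemma inverse_power_le:
  fixes a b :: real
  assumes "0 < a" "a \<le> b"
  shows "1 / b ^ n \<le> 1 / a ^ n"
  using assms by (simp add: divide_simps power_mono)

lemma inverse_power_less:
  fixes a b :: real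
  assumes "0 < a" "a < b" "n \<noteq> 0"
  shows "1 / b ^ n < 1 / a ^ n"
  using assms by (simp add: divide_simps power_strict_mono)

lemma convex_on_midpoint_le_integral:
  fixes f :: "real \<Rightarrow> real"
  assumes conv: "convex_on S f" "connected S"
    and sub: "{a..b} \<subseteq> S" and mid: "(a + b) / 2 \<in> interior S"
    and deriv: "(f has_real_derivative f') (at ((a + b) / 2))"
    and cont: "continuous_on {a..b} f" and "a \<le> b"
  shows "(b - a) * f ((a + b) / 2) \<le> integral {a..b} f"
proof -
  define m where "m = (a + b) / 2"
  have tangent: "f m + f' * (x - m) \<le> f x" if "x \<in> {a..b}" for x
    using convex_on_imp_above_tangent[OF conv mid[folded m_def], of x f'] that sub
      has_field_derivative_at_within[OF deriv[folded m_def]] by force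
  have "((\<lambda>x. f m + f' * (x - m)) has_integral
         (f m * b + f' * (b - m)^2/2) - (f m * a + f' * (a - m)^2/2)) {a..b}"
    using \<open>a \<le> b\<close> by (intro fundamental_theorem_of_calculus)
      (auto intro!: derivative_eq_intros simp flip: has_real_derivative_iff_has_vector_derivative)
  moreover have "(f m * b + f' * (b - m)^2/2) - (f m * a + f' * (a - m)^2/2) = (b - a) * f m"
    by (simp add: m_def power2_eq_square algebra_simps)
  ultimately have "((\<lambda>x. f m + f' * (x - m)) has_integral (b - a) * f m) {a..b}" by simp
  then show ?thesis
    using has_integral_le[OF _ integrable_integral[OF integrable_continuous_real[OF cont]] tangent]
    by (simp add: m_def)
qed

lemma pos_add_ln_mono:
  fixes a x t :: real
  assumes "0 < a" "a \<le> x" "0 < t + ln a"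
  shows "0 < x" "0 < t + ln x"
proof -
  show "0 < x" using assms by linarith
  then have "ln a \<le> ln x" using assms by simp
  then show "0 < t + ln x" using assms by linarith
qed

lemma exp_minus_less_iff:
  fixes t x :: real
  shows "exp (- t) < x \<longleftrightarrow> 0 < x \<and> 0 < t + ln x"
proof (cases "0 < x")
  case True
  then have "exp (- t) < x \<longleftrightarrow> - t < ln x" using exp_less_cancel_iff[of "- t" "ln x"] by simp
  then show ?thesis using True by auto
next
  case False
  then have "\<not> exp (- t) < x" using exp_gt_zero[of "- t"] by linarith
  then show ?thesis using False by simp
qed

lemma has_real_derivative_inverse_power_ln:
  assumes "0 < x" "0 < t + ln x"
  shows "((\<lambda>x. 1 / (t + ln x) ^ (k+1)) has_real_derivative
           - (real k + 1) * (1 / x) / (t + ln x) ^ (k+2)) (at x within S)"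
  using assms by (intro has_real_derivative_inverse_power) (auto intro!: derivative_eq_intros)

lemma convex_on_inverse_power_ln: "convex_on {exp (- t)<..} (\<lambda>x. 1 / (t + ln x) ^ (k+1))"
proof (rule convex_on_realI[where f' = "\<lambda>x. - (real k + 1) * (1 / x) / (t + ln x) ^ (k+2)"])
  show "((\<lambda>x. 1 / (t + ln x) ^ (k+1)) has_real_derivative - (real k + 1) * (1 / x) / (t + ln x) ^ (k+2)) (at x)"
    if "x \<in> {exp (- t)<..}" for x
    using that by (intro has_real_derivative_inverse_power_ln) (auto simp: exp_minus_less_iff)
next
  fix x y :: real
  assume "x \<in> {exp (- t)<..}" "y \<in> {exp (- t)<..}" "x \<le> y"
  then have "0 < x * (t + ln x) ^ (k+2)" "x * (t + ln x) ^ (k+2) \<le> y * (t + ln y) ^ (k+2)"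
    by (auto simp: exp_minus_less_iff intro!: mult_mono power_mono)
  then show "- (real k + 1) * (1 / x) / (t + ln x) ^ (k+2) \<le> - (real k + 1) * (1 / y) / (t + ln y) ^ (k+2)"
    using divide_left_mono_neg[of "x * (t + ln x) ^ (k+2)" "y * (t + ln y) ^ (k+2)" "- (real k + 1)"]
    by simp
qed simp

lemma continuous_on_inverse_power_ln:
  fixes a t :: real
  assumes "0 < a" "0 < t + ln a"
  shows "continuous_on {a..b} (\<lambda>x. 1 / (t + ln x) ^ (k+1))"
proof -
  have "\<forall>x\<in>{a..b}. 0 < x \<and> 0 < t + ln x"
    using assms pos_add_ln_mono[of a _ t] by auto
  then show ?thesis by (intro continuous_intros) auto
qed

lemma integral_inverse_power_ln_ge:
  fixes a t :: real
  assumes "0 < a" "0 < t + ln a"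
  shows "1 / (t + ln (a + 1/2)) ^ (k+1) \<le> integral {a..a+1} (\<lambda>x. 1 / (t + ln x) ^ (k+1))"
proof -
  have inS: "x \<in> {exp (- t)<..}" if "a \<le> x" for x
    using that assms pos_add_ln_mono[of a x t] by (auto simp: exp_minus_less_iff)
  have "(a + 1 - a) * (1 / (t + ln ((a + (a + 1)) / 2)) ^ (k+1))
          \<le> integral {a..a+1} (\<lambda>x. 1 / (t + ln x) ^ (k+1))"
  proof (rule convex_on_midpoint_le_integral[OF convex_on_inverse_power_ln _ _ _
        has_real_derivative_inverse_power_ln])
    show "continuous_on {a..a + 1} (\<lambda>x. 1 / (t + ln x) ^ (k+1))"
      using assms by (rule continuous_on_inverse_power_ln)
  qed (use inS[of "(a + (a + 1)) / 2"] inS assms in \<open>auto simp: interior_open exp_minus_less_iff\<close>)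
  then show ?thesis by (simp add: field_simps)
qed

lemma integral_inverse_power_ln_le:
  fixes a t :: real
  assumes "0 < a" "0 < t + ln a"
  shows "integral {a..a+1} (\<lambda>x. 1 / (t + ln x) ^ (k+1)) \<le> 1 / (t + ln a) ^ (k+1)"
proof -
  have "integral {a..a+1} (\<lambda>x. 1 / (t + ln x) ^ (k+1)) \<le> integral {a..a+1} (\<lambda>x. 1 / (t + ln a) ^ (k+1))"
    using assms pos_add_ln_mono[of a _ t]
    by (intro integral_le integrable_continuous_real continuous_on_inverse_power_ln
        continuous_on_const inverse_power_le) auto
  then show ?thesis by simp
qed

definition theta_term :: "nat \<Rightarrow> real \<Rightarrow> nat \<Rightarrow> real" where
  "theta_term k t j = integral {real j..real j + 1} (\<lambda>x. 1 / (t + ln x) ^ (k+1))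
     - 1 / (harm j - euler_mascheroni + t) ^ (k+1)"

definition theta_majorant :: "nat \<Rightarrow> real \<Rightarrow> nat \<Rightarrow> real" where
  "theta_majorant k t j = 1 / (t + ln (real j)) ^ (k+1) - 1 / (t + ln (real j + 1)) ^ (k+1)"

lemma theta_term_bounds:
  assumes "j \<ge> 1" "0 < t + ln (real j)"
  shows "0 < theta_term k t j" "theta_term k t j \<le> theta_majorant k t j"
proof -
  define c where "c = harm j - (euler_mascheroni::real)"
  have c_lower: "ln (real j + 1/2) < c" and c_upper: "c \<le> ln (real j + 1)"
    unfolding c_def
    by (rule ln_add_half_less_harm_minus_euler_mascheroni harm_minus_euler_mascheroni_le_ln)+
  have "0 < t + ln (real j + 1/2)"
    using assms pos_add_ln_mono[of "real j" "real j + 1/2" t] by auto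
  then have "1 / (c + t) ^ (k+1) < 1 / (t + ln (real j + 1/2)) ^ (k+1)"
    using c_lower by (intro inverse_power_less) auto
  also have "\<dots> \<le> integral {real j..real j + 1} (\<lambda>x. 1 / (t + ln x) ^ (k+1))"
    using assms by (intro integral_inverse_power_ln_ge) auto
  finally show "0 < theta_term k t j" by (simp add: theta_term_def c_def)
  have "integral {real j..real j + 1} (\<lambda>x. 1 / (t + ln x) ^ (k+1)) \<le> 1 / (t + ln (real j)) ^ (k+1)"
    using assms by (intro integral_inverse_power_ln_le) auto
  moreover have "1 / (t + ln (real j + 1)) ^ (k+1) \<le> 1 / (c + t) ^ (k+1)"
    using c_lower c_upper \<open>0 < t + ln (real j + 1/2)\<close> by (intro inverse_power_le) auto
  ultimately show "theta_term k t j \<le> theta_majorant k t j"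
    by (simp add: theta_term_def theta_majorant_def c_def)
qed

lemma theta_majorant_antimono:
  assumes "j \<ge> 1" "0 < t0 + ln (real j)" "t0 \<le> t"
  shows "theta_majorant k t j \<le> theta_majorant k t0 j"
proof (rule DERIV_nonpos_imp_nonincreasing[OF assms(3)])
  fix s assume "t0 \<le> s" "s \<le> t"
  define p q where "p = s + ln (real j)" and "q = s + ln (real j + 1)"
  have pq: "0 < p" "p \<le> q"
    using assms \<open>t0 \<le> s\<close> by (auto simp: p_def q_def)
  have "((\<lambda>s. theta_majorant k s j) has_real_derivative
          - (real k + 1) * 1 / p ^ (k+2) - - (real k + 1) * 1 / q ^ (k+2)) (at s)"
    using pq unfolding theta_majorant_def p_def q_def
    by (intro DERIV_diff has_real_derivative_inverse_power) (auto intro!: derivative_eq_intros)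
  moreover have "(real k + 1) * (1 / q ^ (k+2)) \<le> (real k + 1) * (1 / p ^ (k+2))"
    using pq by (intro mult_left_mono inverse_power_le) auto
  moreover have "- c * 1 / a - - c * 1 / b = c * (1 / b) - c * (1 / a)" for a b c :: real
    by simp
  ultimately show "\<exists>y. ((\<lambda>s. theta_majorant k s j) has_real_derivative y) (at s) \<and> y \<le> 0"
    by (metis diff_le_0_iff_le)
qed

lemma has_real_derivative_integral_inverse_power_ln:
  fixes a b t :: real
  assumes "0 < a" "0 < t + ln a"
  shows "((\<lambda>s. integral {a..b} (\<lambda>x. 1 / (s + ln x) ^ (k+1))) has_real_derivative
           - (real k + 1) * integral {a..b} (\<lambda>x. 1 / (t + ln x) ^ (k+2))) (at t)"
proof -
  define U where "U = {- ln a<..}"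
  have pos: "0 < x \<and> 0 < s + ln x" if "s \<in> U" "x \<in> cbox a b" for s x
    using that assms pos_add_ln_mono[of a x s] by (auto simp: U_def)
  have leibniz: "((\<lambda>s. integral (cbox a b) (\<lambda>x. 1 / (s + ln x) ^ (k+1))) has_real_derivative
          integral (cbox a b) (\<lambda>x. - (real k + 1) * 1 / (t + ln x) ^ (k+2))) (at t within U)"
  proof (rule leibniz_rule_field_derivative)
    show "((\<lambda>s. 1 / (s + ln x) ^ (k+1)) has_real_derivative - (real k + 1) * 1 / (s + ln x) ^ (k+2))
            (at s within U)" if "s \<in> U" "x \<in> cbox a b" for s x
      using pos[OF that] by (intro has_real_derivative_inverse_power) (auto intro!: derivative_eq_intros)
    show "(\<lambda>x. 1 / (s + ln x) ^ (k+1)) integrable_on cbox a b" if "s \<in> U" for s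
      using that assms unfolding cbox_interval
      by (intro integrable_continuous_real continuous_on_inverse_power_ln) (auto simp: U_def)
    have "0 < snd z" "fst z + ln (snd z) \<noteq> 0" if "z \<in> U \<times> cbox a b" for z
      using pos that by (auto simp: mem_Times_iff less_imp_neq[symmetric])
    then have "continuous_on (U \<times> cbox a b) (\<lambda>z. - (real k + 1) * 1 / (fst z + ln (snd z)) ^ (k+2))"
      using assms by (intro continuous_intros) auto
    then show "continuous_on (U \<times> cbox a b) (\<lambda>(s, x). - (real k + 1) * 1 / (s + ln x) ^ (k+2))"
      by (simp add: split_beta)
  qed (use assms in \<open>auto simp: U_def\<close>)
  have "at t within U = at t"
    using assms by (intro at_within_open) (auto simp: U_def)
  moreover have "integral {a..b} (\<lambda>x. - (real k + 1) * 1 / (t + ln x) ^ (k+2))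
      = - (real k + 1) * integral {a..b} (\<lambda>x. 1 / (t + ln x) ^ (k+2))"
    using integral_cmul[of "{a..b}" "- (real k + 1)" "\<lambda>x. 1 / (t + ln x) ^ (k+2)"] by simp
  ultimately show ?thesis
    using leibniz unfolding cbox_interval by simp
qed

lemma has_real_derivative_theta_term:
  assumes "j \<ge> 1" "0 < t + ln (real j)"
  shows "((\<lambda>s. theta_term k s j) has_real_derivative - (real k + 1) * theta_term (k+1) t j) (at t)"
proof -
  have "0 < harm j - euler_mascheroni + t"
    using ln_add_half_less_harm_minus_euler_mascheroni[of j] pos_add_ln_mono[of "real j" "real j + 1/2" t] assms
    by auto
  then have "((\<lambda>s. 1 / (harm j - euler_mascheroni + s) ^ (k+1)) has_real_derivative
               - (real k + 1) * 1 / (harm j - euler_mascheroni + t) ^ (k+2)) (at t)"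
    by (intro has_real_derivative_inverse_power) (auto intro!: derivative_eq_intros)
  from DERIV_diff[OF has_real_derivative_integral_inverse_power_ln this]
  show ?thesis
    using assms by (simp add: theta_term_def algebra_simps)
qed

lemma theta_majorant_sums:
  assumes "N \<ge> 1" "0 < t + ln (real N)"
  shows "(\<lambda>i. theta_majorant k t (N + i)) sums (1 / (t + ln (real N)) ^ (k+1))"
proof -
  have "filterlim (\<lambda>i. t + ln (real (N + i))) at_top sequentially"
    by real_asymp
  then have "filterlim (\<lambda>i. (t + ln (real (N + i))) ^ (k+1)) at_top sequentially"
    by (intro filterlim_pow_at_top) auto
  then have "(\<lambda>i. 1 / (t + ln (real (N + i))) ^ (k+1)) \<longlonglongrightarrow> 0"
    using tendsto_inverse_0_at_top by (simp add: inverse_eq_divide)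
  from telescope_sums'[OF this] show ?thesis
    by (simp add: theta_majorant_def add_ac)
qed

lemma theta_term_bounds_from:
  assumes "N \<ge> 1" "0 < t + ln (real N)"
  shows "0 < theta_term k t (N + i)" "theta_term k t (N + i) \<le> theta_majorant k t (N + i)"
  using assms pos_add_ln_mono[of "real N" "real (N + i)" t] by (auto intro: theta_term_bounds)

lemma summable_theta_term:
  assumes "N \<ge> 1" "0 < t + ln (real N)"
  shows "summable (\<lambda>i. theta_term k t (N + i))"
proof (rule summable_comparison_test')
  show "summable (\<lambda>i. theta_majorant k t (N + i))"
    using theta_majorant_sums[OF assms] by (rule sums_summable)
  show "norm (theta_term k t (N + i)) \<le> theta_majorant k t (N + i)" for i
    using theta_term_bounds_from[OF assms, of k i] by simp
qed

definition theta_series :: "nat \<Rightarrow> nat \<Rightarrow> real \<Rightarrow> real" where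
  "theta_series N k t = (\<Sum>i. theta_term k t (N + i))"

lemma theta_series_pos:
  assumes "N \<ge> 1" "0 < t + ln (real N)"
  shows "0 < theta_series N k t"
  unfolding theta_series_def
  using summable_theta_term[OF assms] theta_term_bounds_from(1)[OF assms] by (rule suminf_pos)

lemma theta_partial_sum_eq:
  assumes "N \<ge> 1" "0 < t + ln (real N)"
  shows "integral {real N..real (n + N)} (\<lambda>x. 1 / (t + ln x) ^ (k+1))
           - (\<Sum>j=N..<n + N. 1 / (harm j - euler_mascheroni + t) ^ (k+1))
         = (\<Sum>i<n. theta_term k t (N + i))"
proof (induction n)
  case (Suc n)
  have "(\<lambda>x. 1 / (t + ln x) ^ (k+1)) integrable_on {real N..real (Suc n + N)}"
    using assms by (intro integrable_continuous_real continuous_on_inverse_power_ln) auto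
  then have "integral {real N..real (n + N)} (\<lambda>x. 1 / (t + ln x) ^ (k+1))
               + integral {real (n + N)..real (Suc n + N)} (\<lambda>x. 1 / (t + ln x) ^ (k+1))
             = integral {real N..real (Suc n + N)} (\<lambda>x. 1 / (t + ln x) ^ (k+1))"
    by (intro Henstock_Kurzweil_Integration.integral_combine) auto
  with Suc.IH show ?case by (simp add: theta_term_def add.commute)
qed simp

lemma theta_sequence_LIMSEQ:
  assumes "N \<ge> 1" "0 < t + ln (real N)"
  shows "(\<lambda>n. integral {real N..real n} (\<lambda>x. 1 / (t + ln x) ^ (k+1))
             - (\<Sum>j=N..<n. 1 / (harm j - euler_mascheroni + t) ^ (k+1)))
         \<longlonglongrightarrow> theta_series N k t"
  by (rule LIMSEQ_offset[where k = N])
    (unfold theta_partial_sum_eq[OF assms] theta_series_def,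
     rule summable_LIMSEQ[OF summable_theta_term[OF assms]])

lemma has_real_derivative_theta_series:
  assumes "N \<ge> 1" "0 < t + ln (real N)"
  shows "((\<lambda>s. theta_series N k s) has_real_derivative - (real k + 1) * theta_series N (k+1) t) (at t)"
proof -
  define t0 where "t0 = (t - ln (real N)) / 2"
  have t0: "0 < t0 + ln (real N)" "t0 < t"
    using assms by (auto simp: t0_def field_simps)
  define S where "S = {t0..}"
  have S_pos: "0 < s + ln (real N)" if "s \<in> S" for s
    using that t0 by (auto simp: S_def)
  have bound: "\<forall>s\<in>S. norm (- (real k + 1) * theta_term (k+1) s (N + i))
                 \<le> (real k + 1) * theta_majorant (k+1) t0 (N + i)" for i
  proof
    fix s assume "s \<in> S"
    have "theta_majorant (k+1) s (N + i) \<le> theta_majorant (k+1) t0 (N + i)"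
      using t0 assms pos_add_ln_mono[of "real N" "real (N + i)" t0] \<open>s \<in> S\<close>
      by (intro theta_majorant_antimono) (auto simp: S_def)
    then show "norm (- (real k + 1) * theta_term (k+1) s (N + i))
                 \<le> (real k + 1) * theta_majorant (k+1) t0 (N + i)"
      using theta_term_bounds_from[OF assms(1) S_pos[OF \<open>s \<in> S\<close>], of "k+1" i]
      by (simp add: abs_mult add.commute mult_left_mono)
  qed
  have majorant: "summable (\<lambda>i. (real k + 1) * theta_majorant (k+1) t0 (N + i))"
    using theta_majorant_sums[OF assms(1) t0(1)] by (intro summable_mult) (rule sums_summable)
  have uniform: "uniformly_convergent_on S (\<lambda>n s. \<Sum>i<n. - (real k + 1) * theta_term (k+1) s (N + i))"
    by (rule Weierstrass_m_test'_ev[OF _ majorant], rule always_eventually) (use bound in blast)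
  have "((\<lambda>s. theta_term k s (N + i)) has_real_derivative - (real k + 1) * theta_term (k+1) s (N + i))
          (at s within S)" if "s \<in> S" for i s
    using assms pos_add_ln_mono[of "real N" "real (N + i)" s] S_pos[OF that]
    by (intro has_field_derivative_at_within[OF has_real_derivative_theta_term]) auto
  from has_field_derivative_series'(2)[OF _ this uniform _ summable_theta_term[OF assms]]
  have "((\<lambda>s. theta_series N k s) has_real_derivative (\<Sum>i. - (real k + 1) * theta_term (k+1) t (N + i))) (at t)"
    using t0 by (auto simp: S_def theta_series_def[abs_def])
  then show ?thesis
    using suminf_mult[OF summable_theta_term[OF assms]] by (simp add: theta_series_def)
qed

lemma iterated_deriv_eq_on_open:
  fixes f :: "real \<Rightarrow> real" and g :: "nat \<Rightarrow> real \<Rightarrow> real"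
  assumes "open U" and "\<And>x. x \<in> U \<Longrightarrow> f x = g 0 x"
    and "\<And>k x. x \<in> U \<Longrightarrow> (g k has_real_derivative g (Suc k) x) (at x)"
    and "x \<in> U"
  shows "(deriv ^^ k) f x = g k x"
  using \<open>x \<in> U\<close>
proof (induction k arbitrary: x)
  case (Suc k)
  have "((deriv ^^ k) f has_real_derivative g (Suc k) x) (at x)"
    using assms(1) Suc by (intro has_field_derivative_transform_within_open[OF assms(3)]) auto
  then show ?case by (simp add: DERIV_imp_deriv)
qed (use assms(2) in simp)

lemma has_real_derivative_iterated_deriv_on_open:
  fixes f :: "real \<Rightarrow> real" and g :: "nat \<Rightarrow> real \<Rightarrow> real"
  assumes "open U" and "\<And>x. x \<in> U \<Longrightarrow> f x = g 0 x"
    and "\<And>k x. x \<in> U \<Longrightarrow> (g k has_real_derivative g (Suc k) x) (at x)"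
    and "x \<in> U"
  shows "((deriv ^^ k) f has_real_derivative g (Suc k) x) (at x)"
  using assms iterated_deriv_eq_on_open[OF assms(1-3)]
  by (intro has_field_derivative_transform_within_open[OF assms(3)]) auto

lemma strictly_totally_monotone_on_openI:
  fixes f :: "real \<Rightarrow> real" and g :: "nat \<Rightarrow> real \<Rightarrow> real"
  assumes "open U" and "\<And>x. x \<in> U \<Longrightarrow> f x = g 0 x"
    and "\<And>k x. x \<in> U \<Longrightarrow> (g k has_real_derivative g (Suc k) x) (at x)"
    and "\<And>k x. x \<in> U \<Longrightarrow> 0 < (-1) ^ k * g k x"
  shows "strictly_totally_monotone U f"
proof -
  have deriv: "((deriv ^^ k) f has_real_derivative g (Suc k) x) (at x)" if "x \<in> U" for k x
    using assms(1-3) that by (rule has_real_derivative_iterated_deriv_on_open)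
  have "continuous_on U f"
    using deriv[of _ 0] by (intro continuous_at_imp_continuous_on ballI DERIV_isCont) auto
  moreover have "(deriv ^^ k) f field_differentiable (at x)" if "x \<in> U" for k x
    using deriv[OF that] by (auto simp: field_differentiable_def)
  moreover have "0 < (-1) ^ k * (deriv ^^ k) f x" if "x \<in> U" for k x
    using assms(4)[OF that] iterated_deriv_eq_on_open[OF assms(1-3) that] by simp
  ultimately show ?thesis
    using assms(1) by (simp add: strictly_totally_monotone_def interior_open)
qed

theorem proposition3p8:
  fixes N :: nat
  assumes "N \<ge> 1"
  shows "strictly_totally_monotone {- ln (real N)<..} (\<lambda>t. theta t N) \<and>
    (\<forall>(k::nat) (t::real). t > - ln (real N) \<longrightarrow>
       convergent (\<lambda>n::nat. integral {real N..real n} (\<lambda>x. 1 / (t + ln x) ^ (k + 1))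
          - (\<Sum>j=N..<n. 1 / (harm j - euler_mascheroni + t) ^ (k + 1))) \<and>
       (-1) ^ k * (deriv ^^ k) (\<lambda>t. theta t N) t =
         fact k * lim (\<lambda>n::nat. integral {real N..real n} (\<lambda>x. 1 / (t + ln x) ^ (k + 1))
          - (\<Sum>j=N..<n. 1 / (harm j - euler_mascheroni + t) ^ (k + 1))) \<and>
       fact k * lim (\<lambda>n::nat. integral {real N..real n} (\<lambda>x. 1 / (t + ln x) ^ (k + 1))
          - (\<Sum>j=N..<n. 1 / (harm j - euler_mascheroni + t) ^ (k + 1))) > 0)"
proof -
  define U where "U = {- ln (real N)<..}"
  define seq where "seq k t = (\<lambda>n::nat. integral {real N..real n} (\<lambda>x. 1 / (t + ln x) ^ (k + 1))
          - (\<Sum>j=N..<n. 1 / (harm j - euler_mascheroni + t) ^ (k + 1)))" for k t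
  define g where "g k t = (-1) ^ k * fact k * theta_series N k t" for k t
  have U_iff: "t \<in> U \<longleftrightarrow> 0 < t + ln (real N)" for t
    by (auto simp: U_def)
  have LIMSEQ: "seq k t \<longlonglongrightarrow> theta_series N k t" if "t \<in> U" for k t
    using theta_sequence_LIMSEQ[OF assms] that by (simp add: seq_def U_iff)
  have theta_eq: "theta t N = g 0 t" if "t \<in> U" for t
    using limI[OF LIMSEQ[OF that, of 0]] by (simp add: theta_def seq_def g_def)
  have g_deriv: "(g k has_real_derivative g (Suc k) t) (at t)" if "t \<in> U" for k t
    using DERIV_cmult[OF has_real_derivative_theta_series[OF assms, unfolded U_iff[symmetric], OF that],
        of "(-1) ^ k * fact k" k]
    by (simp add: g_def[abs_def] algebra_simps)
  have g_sign: "(-1) ^ k * g k t = fact k * theta_series N k t" for k t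
    by (simp add: g_def flip: mult.assoc power_mult_distrib)
  have theta_series_pos: "0 < theta_series N k t" if "t \<in> U" for k t
    using theta_series_pos[OF assms] that by (simp add: U_iff)
  have g_pos: "0 < (-1) ^ k * g k t" if "t \<in> U" for k t
    unfolding g_sign using theta_series_pos[OF that] by simp
  have "open U" by (simp add: U_def)
  have iterated: "(deriv ^^ k) (\<lambda>t. theta t N) t = g k t" if "t \<in> U" for k t
    using \<open>open U\<close> theta_eq g_deriv that by (rule iterated_deriv_eq_on_open)
  show ?thesis
    unfolding seq_def[symmetric] U_def[symmetric]
  proof (intro conjI allI impI)
    show "strictly_totally_monotone U (\<lambda>t. theta t N)"
      using \<open>open U\<close> theta_eq g_deriv g_pos by (rule strictly_totally_monotone_on_openI)
    fix k t assume "- ln (real N) < t"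
    then have t: "t \<in> U" by (simp add: U_def)
    show "convergent (seq k t)"
      using LIMSEQ[OF t] by (auto simp: convergent_def)
    show "(-1) ^ k * (deriv ^^ k) (\<lambda>t. theta t N) t = fact k * lim (seq k t)"
      using iterated[OF t] g_sign limI[OF LIMSEQ[OF t]] by simp
    show "0 < fact k * lim (seq k t)"
      using theta_series_pos[OF t] limI[OF LIMSEQ[OF t]] by simp
  qed
qed

end
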